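(* Let $\arctan$ denote the principal branch of the inverse tangent on $\mathbb{C}\setminus\big((-i\infty,-i]\cup[i,i\infty)\big)$ with $\arctan 0=0$. For every $n\in\mathbb{N}$ and every $z$ in this domain with $z\neq0$, \[ (\arctan z)^{(n)}=\frac{(n-1)!}{(2z)^{n-1}}\sum_{k=0}^{n-1}(-1)^k\binom{k}{n-k-1}\frac{(2z)^{2k}}{(1+z^2)^{k+1}}. \] Moreover, \[ \frac{\arctan z}{z}=\sum_{n=0}^{\infty}(-1)^n\Big[\frac{\pi}{4}+T(n)\Big](z-1)^n,\qquad |z-1|<\sqrt2, \] where $T(0)=0$ and $T(n)=\sum_{k=1}^{n}\frac{(-1)^k}{2^{k/2}k}\sin\frac{3k\pi}{4}$ for $n\ge1$.
   Context: Ordinary binomial coefficients, with $\binom{k}{j}=0$ if $j>k$. *)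

theory Defs
  imports "HOL-Analysis.Analysis"
begin

definition T :: "nat \<Rightarrow> real" where
  "T n = (\<Sum>k=1..n. (-1)^k / (2 powr (real k / 2) * real k) * sin (3 * real k * pi / 4))"

(* arctan z / z, with its removable singularity at z = 0 filled in by the limit value 1 *)
definition arctan_div :: "complex \<Rightarrow> complex" where
  "arctan_div z = (if z = 0 then 1 else Arctan z / z)"

end

theory Submission
  imports Defs "HOL-Complex_Analysis.Cauchy_Integral_Formula"
begin

text \<open>
  With \<open>P = 1/(z-\<i>)\<close> and \<open>Q = 1/(z+\<i>)\<close> we have \<open>Arctan' z = 1/(1+z^2) = (P - Q)/(2\<i>)\<close>, so
  \<open>Arctan^(m+1) z = m! (-1)^m (P^(m+1) - Q^(m+1))/(2\<i>)\<close>. These differences of powers obey the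
  linear recurrence with coefficients \<open>P + Q = 2z/(1+z^2)\<close> and \<open>PQ = 1/(1+z^2)\<close>; rescaled by
  \<open>(2z)^m (1+z^2)\<close> it becomes \<open>A(m+2) = t (A(m+1) + A(m))\<close> with \<open>t = -4z^2/(1+z^2)\<close>, the
  recurrence of the polynomials \<open>A(m) = \<Sum>\<^sub>k (k choose m-k) t^k\<close>.

  \<open>Arctan z / z\<close> is holomorphic on the whole domain of \<open>Arctan\<close> (the singularity at 0 is
  removable), which contains the disc \<open>|z - 1| < \<surd>2\<close>. Leibniz' rule for
  \<open>Arctan z = z \<cdot> (Arctan z / z)\<close> gives \<open>c(n) = Arctan^(n)(1)/n! - c(n-1)\<close> for the Taylor
  coefficients \<open>c(n)\<close> at 1, and \<open>Arctan^(n)(1)/n! = sin(3n\<pi>/4) / (n 2^(n/2))\<close> because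
  \<open>-1/(1 \<plusminus> \<i>) = exp(\<plusminus>3\<pi>\<i>/4)/\<surd>2\<close>.
\<close>

definition arctan_domain :: "complex set" where
  "arctan_domain = {z. Re z = 0 \<longrightarrow> \<bar>Im z\<bar> < 1}"

lemma open_arctan_domain: "open arctan_domain"
proof -
  have "arctan_domain = - ({z. Re z = 0} \<inter> {z. 1 \<le> \<bar>Im z\<bar>})"
    by (auto simp: arctan_domain_def)
  moreover have "closed ({z. Re z = 0} \<inter> {z. 1 \<le> \<bar>Im z\<bar>})"
    by (intro closed_Int closed_Collect_le closed_Collect_eq continuous_intros)
  ultimately show ?thesis
    by (metis open_Compl)
qed

lemma one_plus_square_factor: "1 + z\<^sup>2 = (z - \<i>) * (z + \<i>)"
  by (simp add: algebra_simps power2_eq_square)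

lemma one_plus_square_nonzero:
  assumes "z \<in> arctan_domain"
  shows "1 + z\<^sup>2 \<noteq> 0"
proof -
  have "z \<noteq> \<i>" "z \<noteq> - \<i>"
    using assms by (auto simp: arctan_domain_def)
  then show ?thesis
    by (simp add: one_plus_square_factor add_eq_0_iff2)
qed

subsection \<open>Higher derivatives of the arctangent\<close>

text \<open>\<open>pf_deriv m z\<close> is \<open>(1/(1+z^2))^(m)/m!\<close>, read off the partial fractions of \<open>1/(1+z^2)\<close>.\<close>

definition pf_deriv :: "nat \<Rightarrow> complex \<Rightarrow> complex" where
  "pf_deriv m z = (-1)^m / (2 * \<i>) * (inverse (z - \<i>) ^ (m + 1) - inverse (z + \<i>) ^ (m + 1))"

lemma pf_deriv_0:
  assumes "1 + z\<^sup>2 \<noteq> 0"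
  shows "pf_deriv 0 z = inverse (1 + z\<^sup>2)"
proof -
  have "z - \<i> \<noteq> 0" "z + \<i> \<noteq> 0"
    using assms by (auto simp: one_plus_square_factor)
  then show ?thesis
    unfolding pf_deriv_def one_plus_square_factor by (simp add: field_simps)
qed

lemma has_field_derivative_inverse_power:
  fixes a z :: "'a::real_normed_field"
  assumes "z \<noteq> a"
  shows "((\<lambda>w. inverse (w - a) ^ Suc m) has_field_derivative
           - (of_nat (Suc m) * inverse (z - a) ^ Suc (Suc m))) (at z)"
proof -
  have "((\<lambda>w. inverse (w - a)) has_field_derivative - inverse ((z - a)\<^sup>2)) (at z)"
    using assms by (auto intro!: derivative_eq_intros simp: power_inverse power2_eq_square)
  from DERIV_power[OF this, of "Suc m"] show ?thesis
    by (rule DERIV_cong) (simp add: power_inverse power2_eq_square)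
qed

lemma has_field_derivative_pf_deriv:
  assumes "1 + z\<^sup>2 \<noteq> 0"
  shows "(pf_deriv m has_field_derivative of_nat (Suc m) * pf_deriv (Suc m) z) (at z)"
proof -
  have "z \<noteq> \<i>" "z \<noteq> - \<i>"
    using assms by (auto simp: one_plus_square_factor)
  then have deriv: "(pf_deriv m has_field_derivative (-1)^m / (2 * \<i>) *
      (- (of_nat (Suc m) * inverse (z - \<i>) ^ Suc (Suc m))
       - - (of_nat (Suc m) * inverse (z + \<i>) ^ Suc (Suc m)))) (at z)"
    unfolding pf_deriv_def [abs_def]
    using has_field_derivative_inverse_power[of z "\<i>" m]
      has_field_derivative_inverse_power[of z "- \<i>" m]
    by (intro DERIV_cmult DERIV_diff) auto
  have eq: "\<And>P Q :: complex. (-1)^m / (2 * \<i>) *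
      (- (of_nat (Suc m) * P ^ Suc (Suc m)) - - (of_nat (Suc m) * Q ^ Suc (Suc m)))
    = of_nat (Suc m) * ((-1) ^ Suc m / (2 * \<i>) * (P ^ (Suc m + 1) - Q ^ (Suc m + 1)))"
    by (simp add: field_simps)
  show ?thesis
    unfolding pf_deriv_def by (rule DERIV_cong[OF deriv[unfolded pf_deriv_def] eq])
qed

lemma higher_deriv_Arctan:
  "z \<in> arctan_domain \<Longrightarrow> (deriv ^^ Suc m) Arctan z = fact m * pf_deriv m z"
proof (induction m arbitrary: z)
  case 0
  then show ?case
    using has_field_derivative_Arctan[of z]
    by (auto simp: arctan_domain_def pf_deriv_0 one_plus_square_nonzero intro!: DERIV_imp_deriv)
next
  case (Suc m)
  have "\<forall>\<^sub>F w in nhds z. (deriv ^^ Suc m) Arctan w = fact m * pf_deriv m w"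
    using eventually_nhds_in_open[OF open_arctan_domain Suc.prems]
    by (rule eventually_mono) (use Suc.IH in auto)
  then have "(deriv ^^ Suc (Suc m)) Arctan z = deriv (\<lambda>w. fact m * pf_deriv m w) z"
    by (simp add: deriv_cong_ev)
  also have "\<dots> = fact (Suc m) * pf_deriv (Suc m) z"
    using has_field_derivative_pf_deriv[OF one_plus_square_nonzero[OF Suc.prems], of m]
    by (intro DERIV_imp_deriv) (auto intro!: derivative_eq_intros simp: algebra_simps)
  finally show ?case .
qed

subsection \<open>The binomial sum\<close>

definition choose_poly :: "nat \<Rightarrow> 'a::comm_semiring_1 \<Rightarrow> 'a" where
  "choose_poly m t = (\<Sum>k=0..m. of_nat (k choose (m - k)) * t ^ k)"

lemma choose_poly_0 [simp]: "choose_poly 0 t = 1"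
  by (simp add: choose_poly_def)

lemma choose_poly_1 [simp]: "choose_poly (Suc 0) t = t"
  by (simp add: choose_poly_def)

lemma choose_poly_Suc_Suc:
  "choose_poly (Suc (Suc m)) t = t * (choose_poly (Suc m) t + choose_poly m t)"
proof -
  have "choose_poly (Suc (Suc m)) t = (\<Sum>j=0..Suc m. of_nat (Suc j choose (Suc m - j)) * t ^ Suc j)"
    unfolding choose_poly_def by (subst sum.atLeast0_atMost_Suc_shift) simp
  also have "\<dots> = (\<Sum>j=0..m. of_nat (Suc j choose (Suc m - j)) * t ^ Suc j) + t ^ Suc (Suc m)"
    by (simp add: sum.atLeast0_atMost_Suc)
  also have "(\<Sum>j=0..m. of_nat (Suc j choose (Suc m - j)) * t ^ Suc j)
      = (\<Sum>j=0..m. t * (of_nat (j choose (Suc m - j)) * t ^ j)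
                  + t * (of_nat (j choose (m - j)) * t ^ j))"
  proof (rule sum.cong [OF refl])
    fix j
    assume "j \<in> {0..m}"
    then have "Suc m - j = Suc (m - j)"
      by auto
    then show "of_nat (Suc j choose (Suc m - j)) * t ^ Suc j
        = t * (of_nat (j choose (Suc m - j)) * t ^ j) + t * (of_nat (j choose (m - j)) * t ^ j)"
      by (simp add: algebra_simps)
  qed
  also have "\<dots> + t ^ Suc (Suc m) = t * (choose_poly (Suc m) t + choose_poly m t)"
    unfolding choose_poly_def
    by (simp add: sum.distrib sum_distrib_left sum.atLeast0_atMost_Suc algebra_simps)
  finally show ?thesis .
qed

lemma choose_poly_unique:
  assumes "u 0 = 1" "u (Suc 0) = t"
    and "\<And>m. u (Suc (Suc m)) = t * (u (Suc m) + u m)"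
  shows "u m = choose_poly m t"
proof -
  have "u m = choose_poly m t \<and> u (Suc m) = choose_poly (Suc m) t"
    by (induction m) (simp_all add: assms choose_poly_Suc_Suc)
  then show ?thesis ..
qed

lemma pf_deriv_Suc_Suc:
  "pf_deriv (Suc (Suc m)) z = - (inverse (z - \<i>) + inverse (z + \<i>)) * pf_deriv (Suc m) z
     - inverse (z - \<i>) * inverse (z + \<i>) * pf_deriv m z"
proof -
  have "\<And>c P Q :: complex. c * (P ^ (Suc (Suc m) + 1) - Q ^ (Suc (Suc m) + 1))
      = - (P + Q) * (- c * (P ^ (Suc m + 1) - Q ^ (Suc m + 1))) - P * Q * (c * (P ^ (m + 1) - Q ^ (m + 1)))"
    by (simp add: algebra_simps)
  moreover have "(-1::complex) ^ Suc (Suc m) / (2 * \<i>) = (-1) ^ m / (2 * \<i>)"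
    and "(-1::complex) ^ Suc m / (2 * \<i>) = - ((-1) ^ m / (2 * \<i>))"
    by simp_all
  ultimately show ?thesis
    unfolding pf_deriv_def by presburger
qed

lemma pf_deriv_1:
  "pf_deriv (Suc 0) z = - (inverse (z - \<i>) + inverse (z + \<i>)) * pf_deriv 0 z"
proof -
  have "\<And>c P Q :: complex. - c * (P ^ (Suc 0 + 1) - Q ^ (Suc 0 + 1)) = - (P + Q) * (c * (P ^ (0 + 1) - Q ^ (0 + 1)))"
    by (simp add: algebra_simps power2_eq_square)
  moreover have "(-1::complex) ^ Suc 0 / (2 * \<i>) = - ((-1) ^ 0 / (2 * \<i>))"
    by simp
  ultimately show ?thesis
    unfolding pf_deriv_def by presburger
qed

lemma inverse_z_pm_i_sum_prod:
  assumes "1 + z\<^sup>2 \<noteq> 0"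
  shows "inverse (z - \<i>) + inverse (z + \<i>) = 2 * z / (1 + z\<^sup>2)"
    and "inverse (z - \<i>) * inverse (z + \<i>) = 1 / (1 + z\<^sup>2)"
proof -
  have "z - \<i> \<noteq> 0" "z + \<i> \<noteq> 0"
    using assms by (auto simp: one_plus_square_factor)
  then show "inverse (z - \<i>) + inverse (z + \<i>) = 2 * z / (1 + z\<^sup>2)"
    and "inverse (z - \<i>) * inverse (z + \<i>) = 1 / (1 + z\<^sup>2)"
    unfolding one_plus_square_factor by (simp_all add: field_simps)
qed

lemma pf_deriv_eq_choose_poly:
  assumes nz: "1 + z\<^sup>2 \<noteq> 0"
  shows "(2 * z) ^ m * (1 + z\<^sup>2) * pf_deriv m z = choose_poly m (- (2 * z)\<^sup>2 / (1 + z\<^sup>2))"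
proof (rule choose_poly_unique)
  show "(2 * z) ^ 0 * (1 + z\<^sup>2) * pf_deriv 0 z = 1"
    using nz by (simp add: pf_deriv_0)
  have "\<And>w u :: complex. u \<noteq> 0 \<Longrightarrow> w ^ Suc 0 * u * (- (w / u) * inverse u) = - w\<^sup>2 / u"
    by (simp add: field_simps power2_eq_square)
  then show "(2 * z) ^ Suc 0 * (1 + z\<^sup>2) * pf_deriv (Suc 0) z = - (2 * z)\<^sup>2 / (1 + z\<^sup>2)"
    unfolding pf_deriv_1 pf_deriv_0[OF nz] inverse_z_pm_i_sum_prod[OF nz] using nz by simp
  have "\<And>w u d d' :: complex. u \<noteq> 0 \<Longrightarrow> w ^ Suc (Suc m) * u * (- (w / u) * d' - 1 / u * d)
      = - w\<^sup>2 / u * (w ^ Suc m * u * d' + w ^ m * u * d)" for m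
    by (simp add: field_simps power2_eq_square)
  then show "(2 * z) ^ Suc (Suc m) * (1 + z\<^sup>2) * pf_deriv (Suc (Suc m)) z
      = - (2 * z)\<^sup>2 / (1 + z\<^sup>2) *
        ((2 * z) ^ Suc m * (1 + z\<^sup>2) * pf_deriv (Suc m) z + (2 * z) ^ m * (1 + z\<^sup>2) * pf_deriv m z)"
    for m
    unfolding pf_deriv_Suc_Suc inverse_z_pm_i_sum_prod[OF nz] using nz by blast
qed

lemma sum_choose_eq_pf_deriv:
  assumes nz: "1 + z\<^sup>2 \<noteq> 0"
  shows "(\<Sum>k=0..m. (-1)^k * of_nat (k choose (m - k)) * (2 * z) ^ (2 * k) / (1 + z\<^sup>2) ^ (k + 1))
       = (2 * z) ^ m * pf_deriv m z"
proof -
  have "\<And>c w u :: complex. (-1)^k * c * w ^ (2 * k) / u ^ (k + 1) = c * (- w\<^sup>2 / u) ^ k / u" for k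
    by (simp add: power_divide power_minus[of "_ / _"] mult_ac flip: power_mult_distrib power_mult)
  then have "(\<Sum>k=0..m. (-1)^k * of_nat (k choose (m - k)) * (2 * z) ^ (2 * k) / (1 + z\<^sup>2) ^ (k + 1))
      = (\<Sum>k=0..m. of_nat (k choose (m - k)) * (- (2 * z)\<^sup>2 / (1 + z\<^sup>2)) ^ k / (1 + z\<^sup>2))"
    by (intro sum.cong refl)
  also have "\<dots> = choose_poly m (- (2 * z)\<^sup>2 / (1 + z\<^sup>2)) / (1 + z\<^sup>2)"
    unfolding choose_poly_def by (rule sum_divide_distrib [symmetric])
  also have "\<dots> = (2 * z) ^ m * pf_deriv m z"
    unfolding pf_deriv_eq_choose_poly [OF nz, symmetric] using nz by simp
  finally show ?thesis .
qed

subsection \<open>The Taylor expansion of \<open>Arctan z / z\<close> at 1\<close>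

lemma arctan_div_tendsto_0: "(arctan_div \<longlongrightarrow> arctan_div 0) (at 0)"
proof -
  have "(Arctan has_field_derivative 1) (at 0)"
    using has_field_derivative_Arctan[of 0] by simp
  then have "((\<lambda>w. Arctan w / w) \<longlongrightarrow> 1) (at 0)"
    by (simp add: has_field_derivative_iff)
  moreover have "\<forall>\<^sub>F w in at 0. Arctan w / w = arctan_div w"
    by (simp add: arctan_div_def eventually_at_filter)
  ultimately have "(arctan_div \<longlongrightarrow> 1) (at 0)"
    by (simp add: tendsto_cong)
  then show ?thesis
    by (simp add: arctan_div_def)
qed

lemma arctan_div_holomorphic: "arctan_div holomorphic_on arctan_domain"
proof (rule no_isolated_singularity' [where K = "{0}"])
  show "(arctan_div \<longlongrightarrow> arctan_div z) (at z within arctan_domain)" if "z \<in> {0}" for z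
    using that arctan_div_tendsto_0 tendsto_within_subset by fastforce
  have "(\<lambda>w. Arctan w / w) holomorphic_on (arctan_domain - {0})"
    by (intro holomorphic_intros holomorphic_on_Arctan) (auto simp: arctan_domain_def)
  then show "arctan_div holomorphic_on (arctan_domain - {0})"
    by (rule holomorphic_transform) (auto simp: arctan_div_def)
qed (auto simp: open_arctan_domain)

lemma ball_one_sqrt2_subset_arctan_domain: "ball 1 (sqrt 2) \<subseteq> arctan_domain"
proof
  fix z :: complex
  assume "z \<in> ball 1 (sqrt 2)"
  then have dist: "cmod (1 - z) < sqrt 2"
    by (simp add: dist_norm)
  show "z \<in> arctan_domain"
    unfolding arctan_domain_def
  proof (intro CollectI impI)
    assume "Re z = 0"
    then have "cmod (1 - z) = sqrt (1 + (Im z)\<^sup>2)"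
      by (simp add: cmod_def)
    with dist have "(Im z)\<^sup>2 < 1\<^sup>2"
      by simp
    then show "\<bar>Im z\<bar> < 1"
      by (simp add: power2_less_imp_less)
  qed
qed

lemma higher_deriv_mult_ident:
  assumes "f holomorphic_on S" "open S" "z \<in> S"
  shows "(deriv ^^ Suc k) (\<lambda>w. w * f w) z
       = z * (deriv ^^ Suc k) f z + of_nat (Suc k) * (deriv ^^ k) f z"
proof -
  have "(deriv ^^ Suc k) (\<lambda>w. w * f w) z
      = (\<Sum>i = 0..Suc k. of_nat (Suc k choose i) * (deriv ^^ i) (\<lambda>w. w) z * (deriv ^^ (Suc k - i)) f z)"
    by (rule higher_deriv_mult [OF holomorphic_on_ident assms])
  also have "\<dots> = (\<Sum>i \<in> {0, 1}. of_nat (Suc k choose i) * (deriv ^^ i) (\<lambda>w. w) z * (deriv ^^ (Suc k - i)) f z)"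
    by (rule sum.mono_neutral_right) auto
  also have "\<dots> = z * (deriv ^^ Suc k) f z + of_nat (Suc k) * (deriv ^^ k) f z"
    by simp
  finally show ?thesis .
qed

lemma cos_three_pi_quarter: "cos (3 * pi / 4) = - sqrt 2 / 2"
  and sin_three_pi_quarter: "sin (3 * pi / 4) = sqrt 2 / 2"
proof -
  have pi: "3 * pi / 4 = pi - pi / 4"
    by simp
  show "cos (3 * pi / 4) = - sqrt 2 / 2"
    unfolding pi cos_diff by (simp add: cos_45 sin_45)
  show "sin (3 * pi / 4) = sqrt 2 / 2"
    unfolding pi sin_diff by (simp add: cos_45 sin_45)
qed

lemma minus_inverse_one_plus_i: "- inverse (1 + \<i>) = of_real (inverse (sqrt 2)) * cis (3 * pi / 4)"
proof -
  have "- inverse (1 + \<i>) = (\<i> - 1) / 2"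
    by (simp add: complex_eq_iff)
  then show ?thesis
    unfolding cis.code cos_three_pi_quarter sin_three_pi_quarter
    by (simp add: complex_eq_iff field_simps)
qed

lemma minus_inverse_one_minus_i: "- inverse (1 - \<i>) = of_real (inverse (sqrt 2)) * cis (- (3 * pi / 4))"
proof -
  have "- inverse (1 - \<i>) = (- \<i> - 1) / 2"
    by (simp add: complex_eq_iff)
  then show ?thesis
    unfolding cis.code cos_minus sin_minus cos_three_pi_quarter sin_three_pi_quarter
    by (simp add: complex_eq_iff field_simps)
qed

lemma pf_deriv_at_1:
  "pf_deriv k 1 = of_real (sin (3 * real (Suc k) * pi / 4) / 2 powr (real (Suc k) / 2))"
proof -
  define j where "j = Suc k"
  have "\<And>P Q :: complex. (-1) ^ k * (P ^ j - Q ^ j) = (- Q) ^ j - (- P) ^ j"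
    by (simp add: j_def power_minus' algebra_simps)
  then have "pf_deriv k 1 = ((- inverse (1 + \<i>)) ^ j - (- inverse (1 - \<i>)) ^ j) / (2 * \<i>)"
    unfolding pf_deriv_def j_def by simp
  also have "\<dots> = of_real (inverse (sqrt 2) ^ j * sin (real j * (3 * pi / 4)))"
    unfolding minus_inverse_one_plus_i minus_inverse_one_minus_i power_mult_distrib Complex.DeMoivre
    by (simp add: complex_eq_iff)
  also have "inverse (sqrt 2) ^ j = inverse (2 powr (real j / 2))"
  proof -
    have "2 powr (real j / 2) = (2 powr (1 / 2)) powr real j"
      by (simp add: powr_powr)
    then show ?thesis
      by (simp add: powr_half_sqrt powr_realpow power_inverse)
  qed
  also have "real j * (3 * pi / 4) = 3 * real j * pi / 4"
    by simp
  finally show ?thesis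
    unfolding j_def [symmetric] by (simp add: field_simps)
qed

lemma T_Suc:
  "T (Suc k) = T k + (-1) ^ Suc k / (2 powr (real (Suc k) / 2) * real (Suc k)) * sin (3 * real (Suc k) * pi / 4)"
  by (simp add: T_def)

lemma arctan_div_taylor_coeff:
  "(deriv ^^ n) arctan_div 1 / fact n = (-1) ^ n * of_real (pi / 4 + T n)"
proof (induction n)
  case 0
  have "Arctan 1 = of_real (pi / 4)"
    using Arctan_of_real [of 1] by (simp add: arctan_one)
  then show ?case
    by (simp add: arctan_div_def T_def)
next
  case (Suc k)
  have one: "1 \<in> arctan_domain"
    by (simp add: arctan_domain_def)
  have "(\<lambda>w. w * arctan_div w) = Arctan"
    by (auto simp: arctan_div_def)
  with higher_deriv_mult_ident [OF arctan_div_holomorphic open_arctan_domain one, of k]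
  have "fact k * pf_deriv k 1
      = (deriv ^^ Suc k) arctan_div 1 + of_nat (Suc k) * (deriv ^^ k) arctan_div 1"
    by (simp only: higher_deriv_Arctan [OF one] mult_1_left)
  then have "(deriv ^^ Suc k) arctan_div 1 / fact (Suc k)
      = pf_deriv k 1 / of_nat (Suc k) - (deriv ^^ k) arctan_div 1 / fact k"
    by (simp add: field_simps del: of_nat_Suc)
  also have "\<dots> = (-1) ^ Suc k * of_real (pi / 4 + T (Suc k))"
    unfolding Suc.IH pf_deriv_at_1 T_Suc by (simp add: field_simps)
  finally show ?case .
qed

theorem theorem3p1:
  shows "(\<forall>n::nat. \<forall>z::complex. n \<ge> 1 \<longrightarrow> (Re z = 0 \<longrightarrow> \<bar>Im z\<bar> < 1) \<longrightarrow> z \<noteq> 0 \<longrightarrow>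
            (deriv ^^ n) Arctan z =
              of_nat (fact (n - 1)) / (2 * z) ^ (n - 1) *
              (\<Sum>k=0..n-1. (-1)^k * of_nat (k choose (n - k - 1)) *
                 (2 * z) ^ (2 * k) / (1 + z\<^sup>2) ^ (k + 1)))
       \<and> (\<forall>z::complex. cmod (z - 1) < sqrt 2 \<longrightarrow>
            (\<lambda>n. (-1)^n * complex_of_real (pi / 4 + T n) * (z - 1) ^ n) sums arctan_div z)"
proof (intro conjI allI impI)
  fix n :: nat and z :: complex
  assume "n \<ge> 1" and "Re z = 0 \<longrightarrow> \<bar>Im z\<bar> < 1" and "z \<noteq> 0"
  then obtain m where n: "n = Suc m" and z: "z \<in> arctan_domain"
    by (auto simp: arctan_domain_def intro: that [of "n - 1"])
  have "(\<Sum>k=0..n-1. (-1)^k * of_nat (k choose (n - k - 1)) * (2 * z) ^ (2 * k) / (1 + z\<^sup>2) ^ (k + 1))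
      = (2 * z) ^ m * pf_deriv m z"
    using sum_choose_eq_pf_deriv [OF one_plus_square_nonzero [OF z], of m] by (simp add: n)
  then show "(deriv ^^ n) Arctan z =
      of_nat (fact (n - 1)) / (2 * z) ^ (n - 1) *
      (\<Sum>k=0..n-1. (-1)^k * of_nat (k choose (n - k - 1)) * (2 * z) ^ (2 * k) / (1 + z\<^sup>2) ^ (k + 1))"
    unfolding n higher_deriv_Arctan [OF z] using \<open>z \<noteq> 0\<close> by simp
next
  fix z :: complex
  assume "cmod (z - 1) < sqrt 2"
  then have "z \<in> ball 1 (sqrt 2)"
    by (simp add: dist_norm norm_minus_commute)
  with holomorphic_power_series [OF holomorphic_on_subset [OF arctan_div_holomorphic
          ball_one_sqrt2_subset_arctan_domain]]
  show "(\<lambda>n. (-1)^n * complex_of_real (pi / 4 + T n) * (z - 1) ^ n) sums arctan_div z"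
    by (simp add: arctan_div_taylor_coeff)
qed

end
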